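(* Let $M\in\mathbb{N}_0$ and $N\in\mathbb{N}$ with $N\le\lfloor M/2\rfloor+1$. Let $U_{(N,M)}\in\mathbb{R}^{N\times N}$ be the upper triangular matrix with entries $(U_{(N,M)})_{N-\ell,N-\ell-k}=0$ for $1\le k\le N-1-\ell$, and $$(U_{(N,M)})_{N-\ell,N-\ell+k}=\frac{1}{(2k+1)2^{2k}}\binom{M-2\ell+2k}{2k},\qquad 0\le k\le\ell,$$ for $0\le\ell\le N-1$ (so the diagonal entries, $k=0$, equal $1$). Then $U_{(N,M)}^{-1}$ is upper unitriangular with entries $(U^{-1}_{(N,M)})_{N-\ell,N-\ell-k}=0$ for $1\le k\le N-1-\ell$ and $$(U^{-1}_{(N,M)})_{N-\ell,N-\ell+k}=\tau_{2k}\frac{(M-2\ell+2k)!}{(M-2\ell)!},\qquad 0\le k\le\ell,\ 0\le\ell\le N-1,$$ where $\tau_0=1$ and $\tau_{2k}=\sum_{s=0}^{k-1}\frac{-\tau_{2s}}{2^{2k-2s}(2k-2s+1)!}$ for $k>0$. *)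

theory Defs
  imports Complex_Main "Jordan_Normal_Form.Matrix"
begin

text \<open>tau k stands for the paper's tau_{2k}.\<close>
fun tau :: "nat \<Rightarrow> real" where
  "tau k = (if k = 0 then 1
            else (\<Sum>s<k. - tau s / (2 ^ (2*k - 2*s) * fact (2*k - 2*s + 1))))"

text \<open>Matrices are 0-indexed: row i (0 \<le> i < N) is the paper's row i+1,
  so the paper's row N - l is i = N - 1 - l, and column N - l + k is j = i + k.\<close>
definition U_mat :: "nat \<Rightarrow> nat \<Rightarrow> real mat" where
  "U_mat N M = mat N N (\<lambda>(i,j).
     if j < i then 0
     else (let l = N - 1 - i; k = j - i in
           1 / ((2 * real k + 1) * 2 ^ (2*k)) * real ((M - 2*l + 2*k) choose (2*k))))"

definition Uinv_mat :: "nat \<Rightarrow> nat \<Rightarrow> real mat" where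
  "Uinv_mat N M = mat N N (\<lambda>(i,j).
     if j < i then 0
     else (let l = N - 1 - i; k = j - i in
           tau k * fact (M - 2*l + 2*k) / fact (M - 2*l)))"

end

theory Submission
  imports Defs "HOL-Computational_Algebra.Formal_Power_Series"
begin

text \<open>Writing F i = (M - 2(N-1-i))!, both matrices have the form D^-1 T D with
  D = diag(F 0, ..., F (N-1)) and T an upper triangular Toeplitz matrix: the entries
  of T are the coefficients of a power series, namely c k = 1 / (2^(2k) (2k+1)!) for U
  and \<open>\<tau>\<close> k for its claimed inverse. Such matrices multiply like their power
  series, and the recursion defining \<open>\<tau>\<close> says precisely that the series of \<open>\<tau>\<close>
  is the reciprocal of the series of c. The hypothesis N \<le> M div 2 + 1 only ensures
  that M - 2(N-1-i) = M + 2i + 2 - 2N involves no truncated subtraction.\<close>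

definition scaled_toeplitz_mat :: "nat \<Rightarrow> (nat \<Rightarrow> 'a::field) \<Rightarrow> 'a fps \<Rightarrow> 'a mat" where
  "scaled_toeplitz_mat N F f = mat N N (\<lambda>(i,j). if j < i then 0 else F j / F i * fps_nth f (j - i))"

lemma dim_scaled_toeplitz_mat [simp]:
  "dim_row (scaled_toeplitz_mat N F f) = N" "dim_col (scaled_toeplitz_mat N F f) = N"
  by (simp_all add: scaled_toeplitz_mat_def)

lemma sum_restrict_interval:
  fixes i j N :: nat
  assumes "j < N"
  shows "(\<Sum>m<N. if i \<le> m \<and> m \<le> j then h m else 0) = (\<Sum>m=i..j. h m)"
proof -
  have "(\<Sum>m<N. if i \<le> m \<and> m \<le> j then h m else 0) = (\<Sum>m<N. if m \<in> {i..j} then h m else 0)"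
    by simp
  also have "\<dots> = sum h ({..<N} \<inter> {i..j})"
    by (rule sum.inter_restrict[symmetric]) simp
  also have "{..<N} \<inter> {i..j} = {i..j}"
    using assms by auto
  finally show ?thesis .
qed

lemma scaled_toeplitz_mat_mult:
  assumes F: "\<And>i. i < N \<Longrightarrow> F i \<noteq> 0"
  shows "scaled_toeplitz_mat N F f * scaled_toeplitz_mat N F g = scaled_toeplitz_mat N F (f * g)"
proof (rule eq_matI)
  fix i j
  assume "i < dim_row (scaled_toeplitz_mat N F (f * g))" "j < dim_col (scaled_toeplitz_mat N F (f * g))"
  then have i: "i < N" and j: "j < N"
    by simp_all
  have entry: "scaled_toeplitz_mat N F f $$ (i, m) * scaled_toeplitz_mat N F g $$ (m, j) =
      (if i \<le> m \<and> m \<le> j then F j / F i * (fps_nth f (m - i) * fps_nth g (j - m)) else 0)" if m: "m < N" for m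
    using i j m F[OF i] F[OF m] by (auto simp: scaled_toeplitz_mat_def)
  have "(scaled_toeplitz_mat N F f * scaled_toeplitz_mat N F g) $$ (i, j) =
      (\<Sum>m<N. scaled_toeplitz_mat N F f $$ (i, m) * scaled_toeplitz_mat N F g $$ (m, j))"
    using i j by (simp add: scalar_prod_def lessThan_atLeast0)
  also have "\<dots> = (\<Sum>m<N. if i \<le> m \<and> m \<le> j then F j / F i * (fps_nth f (m - i) * fps_nth g (j - m)) else 0)"
    by (rule sum.cong) (simp_all add: entry)
  also have "\<dots> = (\<Sum>m=i..j. F j / F i * (fps_nth f (m - i) * fps_nth g (j - m)))"
    by (rule sum_restrict_interval[OF j])
  also have "\<dots> = scaled_toeplitz_mat N F (f * g) $$ (i, j)"
  proof (cases "i \<le> j")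
    case True
    have "(\<Sum>m=i..j. F j / F i * (fps_nth f (m - i) * fps_nth g (j - m))) =
        F j / F i * (\<Sum>m=i..j. fps_nth f (m - i) * fps_nth g (j - m))"
      by (rule sum_distrib_left[symmetric])
    also have "(\<Sum>m=i..j. fps_nth f (m - i) * fps_nth g (j - m)) = fps_nth (f * g) (j - i)"
      using sum.atLeastAtMost_shift_0[OF True, of "\<lambda>m. fps_nth f (m - i) * fps_nth g (j - m)"]
      by (simp add: comp_def fps_mult_nth)
    finally show ?thesis
      using True i j by (simp add: scaled_toeplitz_mat_def)
  qed (use i j in \<open>simp add: scaled_toeplitz_mat_def\<close>)
  finally show "(scaled_toeplitz_mat N F f * scaled_toeplitz_mat N F g) $$ (i, j) =
      scaled_toeplitz_mat N F (f * g) $$ (i, j)" .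
qed simp_all

lemma scaled_toeplitz_mat_one:
  assumes F: "\<And>i. i < N \<Longrightarrow> F i \<noteq> 0"
  shows "scaled_toeplitz_mat N F 1 = 1\<^sub>m N"
  using F by (intro eq_matI) (auto simp: scaled_toeplitz_mat_def)

lemma scaled_toeplitz_mat_inverse:
  assumes "\<And>i. i < N \<Longrightarrow> F i \<noteq> 0" and "f * g = 1"
  shows "inverts_mat (scaled_toeplitz_mat N F f) (scaled_toeplitz_mat N F g)"
  using assms by (simp add: inverts_mat_def scaled_toeplitz_mat_mult scaled_toeplitz_mat_one)

definition U_fps :: "real fps" where
  "U_fps = Abs_fps (\<lambda>k. 1 / (2 ^ (2*k) * fact (2*k + 1)))"

declare tau.simps [simp del]

lemma U_fps_times_tau: "U_fps * Abs_fps tau = 1"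
proof (rule fps_ext)
  fix k
  have interval: "{0..k::nat} = insert k {..<k}"
    by auto
  have "fps_nth (U_fps * Abs_fps tau) k = (\<Sum>s=0..k. tau s * fps_nth U_fps (k - s))"
    by (subst mult.commute) (simp add: fps_mult_nth)
  also have "\<dots> = tau k + (\<Sum>s<k. tau s * fps_nth U_fps (k - s))"
    by (simp add: interval U_fps_def)
  also have "\<dots> = fps_nth 1 k"
  proof (cases "k = 0")
    case False
    then have "tau k = - (\<Sum>s<k. tau s * fps_nth U_fps (k - s))"
      by (subst tau.simps) (simp add: U_fps_def sum_negf[symmetric] diff_mult_distrib2[symmetric] del: sum_negf)
    then show ?thesis
      using False by simp
  qed (simp add: tau.simps)
  finally show "fps_nth (U_fps * Abs_fps tau) k = fps_nth 1 k" .
qed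

lemma U_mat_eq_scaled_toeplitz:
  assumes "2 * N \<le> M + 2"
  shows "U_mat N M = scaled_toeplitz_mat N (\<lambda>i. fact (M + 2*i + 2 - 2*N)) U_fps"
proof (rule eq_matI)
  fix i j
  assume "i < dim_row (scaled_toeplitz_mat N (\<lambda>i. fact (M + 2*i + 2 - 2*N)) U_fps)"
    "j < dim_col (scaled_toeplitz_mat N (\<lambda>i. fact (M + 2*i + 2 - 2*N)) U_fps)"
  then have i: "i < N" and j: "j < N"
    by simp_all
  show "U_mat N M $$ (i, j) = scaled_toeplitz_mat N (\<lambda>i. fact (M + 2*i + 2 - 2*N)) U_fps $$ (i, j)"
  proof (cases "i \<le> j")
    case True
    define k n where "k = j - i" and "n = M + 2*j + 2 - 2*N"
    have n: "M - 2 * (N - 1 - i) + 2 * (j - i) = n" "n - 2*k = M + 2*i + 2 - 2*N" "2*k \<le> n"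
      using assms True j unfolding k_def n_def by auto
    have binomial: "real (n choose (2*k)) = fact n / (fact (2*k) * fact (n - 2*k))"
      using binomial_fact[OF n(3)] by simp
    have fact_odd: "fact (2*k + 1) = (2 * real k + 1) * (fact (2*k) :: real)"
      by (simp add: fact_Suc)
    have "U_mat N M $$ (i, j) = 1 / ((2 * real k + 1) * 2 ^ (2*k)) * real (n choose (2*k))"
      using True i j n(1) by (simp add: U_mat_def Let_def k_def)
    also have "\<dots> = fact n / fact (n - 2*k) * fps_nth U_fps k"
      unfolding binomial U_fps_def fact_odd by (simp add: field_simps)
    also have "\<dots> = scaled_toeplitz_mat N (\<lambda>i. fact (M + 2*i + 2 - 2*N)) U_fps $$ (i, j)"
      using True i j n(2) by (simp add: scaled_toeplitz_mat_def k_def n_def)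
    finally show ?thesis .
  qed (use i j in \<open>simp add: U_mat_def scaled_toeplitz_mat_def\<close>)
qed (simp_all add: U_mat_def)

lemma Uinv_mat_eq_scaled_toeplitz:
  assumes "2 * N \<le> M + 2"
  shows "Uinv_mat N M = scaled_toeplitz_mat N (\<lambda>i. fact (M + 2*i + 2 - 2*N)) (Abs_fps tau)"
proof (rule eq_matI)
  fix i j
  assume "i < dim_row (scaled_toeplitz_mat N (\<lambda>i. fact (M + 2*i + 2 - 2*N)) (Abs_fps tau))"
    "j < dim_col (scaled_toeplitz_mat N (\<lambda>i. fact (M + 2*i + 2 - 2*N)) (Abs_fps tau))"
  then have i: "i < N" and j: "j < N"
    by simp_all
  have "M - 2 * (N - 1 - i) + 2 * (j - i) = M + 2*j + 2 - 2*N" if "i \<le> j"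
    using assms that j by auto
  moreover have "M - 2 * (N - 1 - i) = M + 2*i + 2 - 2*N"
    using assms i by auto
  ultimately show "Uinv_mat N M $$ (i, j) =
      scaled_toeplitz_mat N (\<lambda>i. fact (M + 2*i + 2 - 2*N)) (Abs_fps tau) $$ (i, j)"
    using i j by (simp add: Uinv_mat_def scaled_toeplitz_mat_def)
qed (simp_all add: Uinv_mat_def)

theorem lemma5:
  fixes N M :: nat
  assumes "1 \<le> N" and "N \<le> M div 2 + 1"
  shows "invertible_mat (U_mat N M) \<and>
         inverts_mat (U_mat N M) (Uinv_mat N M) \<and>
         inverts_mat (Uinv_mat N M) (U_mat N M)"
proof -
  have "2 * N \<le> M + 2"
    using assms(2) by linarith
  note U = U_mat_eq_scaled_toeplitz[OF this] and Uinv = Uinv_mat_eq_scaled_toeplitz[OF this]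
  have tau_times_U_fps: "Abs_fps tau * U_fps = 1"
    by (subst mult.commute) (fact U_fps_times_tau)
  have right: "inverts_mat (U_mat N M) (Uinv_mat N M)"
    unfolding U Uinv by (intro scaled_toeplitz_mat_inverse fact_nonzero U_fps_times_tau)
  have left: "inverts_mat (Uinv_mat N M) (U_mat N M)"
    unfolding U Uinv by (intro scaled_toeplitz_mat_inverse fact_nonzero tau_times_U_fps)
  have "square_mat (U_mat N M)"
    by (simp add: U)
  then have "invertible_mat (U_mat N M)"
    using left right unfolding invertible_mat_def by blast
  with left right show ?thesis
    by simp
qed

end
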